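(* Let $(X,d)$ be a compact metric space and let $f:X\to X$ be an arbitrary map (no continuity assumed). If $(x_k)_{k\in\mathbb{N}}$ is a sequence in $CR_f$ such that $x_k\,\mathcal{C}\,x_{k+1}$ for every $k$, then there exists $y\in CR_f$ such that $x_k\,\mathcal{C}\,y$ for every $k\in\mathbb{N}$.
   Context: For a metric space $(X,d)$ and map $f:X\to X$: an $\varepsilon$-chain from $x$ to $y$ is a finite sequence $x_0=x,\dots,x_n=y$, $n\ge1$, with $d(f(x_i),x_{i+1})<\varepsilon$ for all $i$; $x\,\mathcal{C}\,y$ iff for every $\varepsilon>0$ there is an $\varepsilon$-chain from $x$ to $y$; $CR_f=\{x\in X:x\,\mathcal{C}\,x\}$. *)

theory Defs
  imports "HOL-Analysis.Analysis"
begin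

definition eps_chain :: "'a::metric_space set \<Rightarrow> ('a \<Rightarrow> 'a) \<Rightarrow> real \<Rightarrow> 'a \<Rightarrow> 'a \<Rightarrow> bool" where
  "eps_chain X f e x y \<longleftrightarrow>
     (\<exists>n::nat. \<exists>c::nat \<Rightarrow> 'a. n \<ge> 1 \<and> c 0 = x \<and> c n = y \<and>
        (\<forall>i\<le>n. c i \<in> X) \<and> (\<forall>i<n. dist (f (c i)) (c (Suc i)) < e))"

definition chain_rel :: "'a::metric_space set \<Rightarrow> ('a \<Rightarrow> 'a) \<Rightarrow> 'a \<Rightarrow> 'a \<Rightarrow> bool" where
  "chain_rel X f x y \<longleftrightarrow> (\<forall>e>0. eps_chain X f e x y)"

definition chain_recurrent_set :: "'a::metric_space set \<Rightarrow> ('a \<Rightarrow> 'a) \<Rightarrow> 'a set" where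
  "chain_recurrent_set X f = {x \<in> X. chain_rel X f x x}"

end

theory Submission
  imports Defs
begin

text \<open>Write \<open>R z\<close> for the set of points reachable from \<open>z\<close> by \<open>\<epsilon>\<close>-chains for every
  \<open>\<epsilon>\<close>. These sets are closed, since the last point of a chain may be moved slightly, and
  \<open>w \<in> R z\<close> implies \<open>R w \<subseteq> R z\<close>; moreover \<open>f z \<in> R z\<close>. By compactness the decreasing
  sets \<open>R (x k)\<close> have a common point, so \<open>S = \<Inter>\<^sub>k R (x k)\<close> is nonempty, and it is
  forward invariant. Compactness also bounds every chain of sets \<open>R z\<close>, \<open>z \<in> S\<close>, so by
  Zorn's lemma some \<open>R z\<close> is minimal. Then \<open>R (f z) = R z \<ni> f z\<close>, i.e. \<open>y = f z\<close> is chain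
  recurrent, and \<open>y \<in> S\<close>. No continuity of \<open>f\<close> is needed, because chains are only ever
  modified at their last point.\<close>

lemma eps_chain_trans:
  assumes "eps_chain X f e a b" and "eps_chain X f e b d"
  shows "eps_chain X f e a d"
proof -
  obtain n :: nat and c where n: "n \<ge> 1" "c 0 = a" "c n = b" "\<forall>i\<le>n. c i \<in> X"
    "\<forall>i<n. dist (f (c i)) (c (Suc i)) < e"
    using assms(1) unfolding eps_chain_def by blast
  obtain m :: nat and c' where m: "m \<ge> 1" "c' 0 = b" "c' m = d" "\<forall>i\<le>m. c' i \<in> X"
    "\<forall>i<m. dist (f (c' i)) (c' (Suc i)) < e"
    using assms(2) unfolding eps_chain_def by blast
  define cc where "cc i = (if i \<le> n then c i else c' (i - n))" for i
  have "dist (f (cc i)) (cc (Suc i)) < e" if "i < n + m" for i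
  proof (cases "i < n")
    case True
    then show ?thesis using n by (simp add: cc_def)
  next
    case False
    then have "cc i = c' (i - n)" and "cc (Suc i) = c' (Suc (i - n))"
      using n m by (auto simp: cc_def Suc_diff_le)
    then show ?thesis using m(5) that False by simp
  qed
  moreover have "\<forall>i\<le>n + m. cc i \<in> X"
    using n(4) m(4) by (auto simp: cc_def)
  moreover have "cc 0 = a" and "cc (n + m) = d"
    using n(2) m(1,3) by (simp_all add: cc_def)
  ultimately show ?thesis
    unfolding eps_chain_def using n(1) by (intro exI[of _ "n + m"] exI[of _ cc]) simp
qed

lemma chain_rel_trans:
  "chain_rel X f a b \<Longrightarrow> chain_rel X f b d \<Longrightarrow> chain_rel X f a d"
  unfolding chain_rel_def using eps_chain_trans by blast

lemma chain_rel_imp_mem: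
  assumes "chain_rel X f a b"
  shows "a \<in> X" and "b \<in> X"
proof -
  have "eps_chain X f 1 a b"
    using assms unfolding chain_rel_def by simp
  then obtain n :: nat and c where "c 0 = a" "c n = b" "\<forall>i\<le>n. c i \<in> X"
    unfolding eps_chain_def by blast
  then show "a \<in> X" and "b \<in> X" by auto
qed

lemma chain_rel_image:
  assumes "a \<in> X" and "f a \<in> X"
  shows "chain_rel X f a (f a)"
  unfolding chain_rel_def eps_chain_def
proof (intro allI impI)
  fix e :: real
  assume "e > 0"
  then show "\<exists>n c. 1 \<le> n \<and> c 0 = a \<and> c n = f a \<and> (\<forall>i\<le>n. c i \<in> X) \<and>
      (\<forall>i<n. dist (f (c i)) (c (Suc i)) < e)"
    using assms by (intro exI[of _ 1] exI[of _ "\<lambda>i. if i = 0 then a else f a"]) auto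
qed

lemma eps_chain_move_endpoint:
  assumes "eps_chain X f e a b" and "b' \<in> X" and "dist b b' < d"
  shows "eps_chain X f (e + d) a b'"
proof -
  obtain n :: nat and c where n: "n \<ge> 1" "c 0 = a" "c n = b" "\<forall>i\<le>n. c i \<in> X"
    and steps: "\<forall>i<n. dist (f (c i)) (c (Suc i)) < e"
    using assms(1) unfolding eps_chain_def by blast
  define c' where "c' = c(n := b')"
  have "dist (f (c' i)) (c' (Suc i)) < e + d" if "i < n" for i
  proof (cases "Suc i = n")
    case True
    have "dist (f (c i)) b' \<le> dist (f (c i)) b + dist b b'"
      by (rule dist_triangle)
    also have "\<dots> < e + d"
      using steps that True n(3) assms(3) by fastforce
    finally show ?thesis
      using True that by (simp add: c'_def)
  next
    case False
    have "0 \<le> d"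
      using assms(3) zero_le_dist[of b b'] by linarith
    then show ?thesis
      using steps that False by (fastforce simp: c'_def)
  qed
  moreover have "\<forall>i\<le>n. c' i \<in> X"
    using n(4) assms(2) by (simp add: c'_def)
  moreover have "c' 0 = a" and "c' n = b'"
    using n(1,2) by (simp_all add: c'_def)
  ultimately show ?thesis
    unfolding eps_chain_def using n(1) by (intro exI[of _ n] exI[of _ c']) simp
qed

lemma closed_chain_rel_forward:
  assumes "closed X"
  shows "closed {w. chain_rel X f z w}" (is "closed ?R")
proof -
  have "?R \<subseteq> X"
    using chain_rel_imp_mem(2) by blast
  then have "closure ?R \<subseteq> X"
    using assms by (rule closure_minimal)
  have "chain_rel X f z w" if w: "w \<in> closure ?R" for w
    unfolding chain_rel_def
  proof (intro allI impI)
    fix e :: real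
    assume "e > 0"
    then obtain y where "y \<in> ?R" and "dist y w < e / 2"
      using w unfolding closure_approachable by (metis half_gt_zero)
    then have "eps_chain X f (e / 2) z y"
      using \<open>e > 0\<close> by (simp add: chain_rel_def)
    then have "eps_chain X f (e / 2 + e / 2) z w"
      using \<open>closure ?R \<subseteq> X\<close> w \<open>dist y w < e / 2\<close>
      by (intro eps_chain_move_endpoint) auto
    then show "eps_chain X f e z w"
      by simp
  qed
  then have "closure ?R \<subseteq> ?R"
    by blast
  then show ?thesis
    by (simp add: closure_subset_eq)
qed

lemma compact_closed_chain:
  fixes \<F> :: "'a::topological_space set set"
  assumes "compact X" and "\<F> \<noteq> {}" and "{} \<notin> \<F>"
    and "\<And>S. S \<in> \<F> \<Longrightarrow> closed S \<and> S \<subseteq> X"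
    and chain: "\<And>S T. S \<in> \<F> \<Longrightarrow> T \<in> \<F> \<Longrightarrow> S \<subseteq> T \<or> T \<subseteq> S"
  shows "\<Inter>\<F> \<noteq> {}"
proof -
  have "X \<inter> \<Inter>\<F> \<noteq> {}"
  proof (rule compact_imp_fip)
    fix \<G> assume "finite \<G>" and "\<G> \<subseteq> \<F>"
    show "X \<inter> \<Inter>\<G> \<noteq> {}"
    proof (cases "\<G> = {}")
      case True
      obtain S where "S \<in> \<F>"
        using assms(2) by blast
      then have "S \<noteq> {}" and "S \<subseteq> X"
        using assms(3,4) by auto
      then show ?thesis
        using True by auto
    next
      case False
      have "subset.chain UNIV \<G>"
        using chain \<open>\<G> \<subseteq> \<F>\<close> unfolding subset_chain_def by blast
      then have "\<Inter>\<G> \<in> \<G>"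
        using Inter_in_chain \<open>finite \<G>\<close> False by blast
      then have "\<Inter>\<G> \<in> \<F>"
        using \<open>\<G> \<subseteq> \<F>\<close> by blast
      then show ?thesis
        using assms(3,4) by (metis Int_absorb1)
    qed
  qed (use assms in auto)
  then show ?thesis
    by blast
qed

lemma compact_transp_minimal_forward_set:
  fixes r :: "'a::topological_space \<Rightarrow> 'a \<Rightarrow> bool"
  assumes "compact X" and "S \<subseteq> X" and "S \<noteq> {}" and "transp r"
    and invariant: "\<And>z w. z \<in> S \<Longrightarrow> r z w \<Longrightarrow> w \<in> S"
    and closed: "\<And>z. z \<in> S \<Longrightarrow> closed {w. r z w}"
    and nonempty: "\<And>z. z \<in> S \<Longrightarrow> \<exists>w. r z w"
  shows "\<exists>z\<in>S. \<forall>w. r z w \<longrightarrow> {v. r w v} = {v. r z v}"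
proof -
  define R where "R z = {w. r z w}" for z
  have R_antimono: "R w \<subseteq> R z" if "r z w" for z w
    using \<open>transp r\<close> that unfolding R_def by (auto dest: transpD)
  \<comment> \<open>Zorn's lemma is stated for \<open>\<subseteq>\<close>-maximal sets, so it is applied to the complements.\<close>
  have "\<exists>M\<in>(\<lambda>z. - R z) ` S. \<forall>Y\<in>(\<lambda>z. - R z) ` S. M \<subseteq> Y \<longrightarrow> Y = M"
  proof (rule subset_Zorn)
    fix \<C> assume \<C>: "subset.chain ((\<lambda>z. - R z) ` S) \<C>"
    show "\<exists>U\<in>(\<lambda>z. - R z) ` S. \<forall>Y\<in>\<C>. Y \<subseteq> U"
    proof (cases "\<C> = {}")
      case True
      then show ?thesis
        using \<open>S \<noteq> {}\<close> by blast
    next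
      case False
      have \<C>_sub: "\<C> \<subseteq> (\<lambda>z. - R z) ` S"
        using \<C> by (simp add: subset_chain_def)
      have R_of: "\<exists>z\<in>S. T = R z" if "T \<in> uminus ` \<C>" for T
        using that \<C>_sub by auto
      have "\<Inter>(uminus ` \<C>) \<noteq> {}"
      proof (rule compact_closed_chain[OF \<open>compact X\<close>])
        show "uminus ` \<C> \<noteq> {}"
          using False by blast
        show "{} \<notin> uminus ` \<C>"
        proof
          assume "{} \<in> uminus ` \<C>"
          then obtain z where "z \<in> S" and "R z = {}"
            using R_of by metis
          then show False
            using nonempty unfolding R_def by auto
        qed
        show "closed T \<and> T \<subseteq> X" if "T \<in> uminus ` \<C>" for T
          using R_of[OF that] closed invariant \<open>S \<subseteq> X\<close> unfolding R_def by blast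
        show "T \<subseteq> T' \<or> T' \<subseteq> T" if "T \<in> uminus ` \<C>" and "T' \<in> uminus ` \<C>" for T T'
          using that \<C> unfolding subset_chain_def by (metis Compl_subset_Compl_iff imageE)
      qed
      then obtain w where w: "\<And>z. - R z \<in> \<C> \<Longrightarrow> r z w"
        unfolding R_def by blast
      obtain z\<^sub>0 where "z\<^sub>0 \<in> S" and "- R z\<^sub>0 \<in> \<C>"
        using False \<C>_sub by blast
      then have "w \<in> S"
        using invariant w by blast
      moreover have "Y \<subseteq> - R w" if "Y \<in> \<C>" for Y
        using that \<C>_sub w R_antimono by blast
      ultimately show ?thesis
        by blast
    qed
  qed
  then obtain z where "z \<in> S" and maximal: "\<And>z'. z' \<in> S \<Longrightarrow> - R z \<subseteq> - R z' \<Longrightarrow> R z' = R z"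
    by auto
  have "R w = R z" if "r z w" for w
    using maximal[OF invariant[OF \<open>z \<in> S\<close> that]] R_antimono[OF that] by blast
  then show ?thesis
    using \<open>z \<in> S\<close> unfolding R_def by blast
qed

lemma chain_rel_seq_Inter_nonempty:
  assumes "compact X" and step: "\<And>k. chain_rel X f (x k) (x (Suc k))"
  shows "(\<Inter>k. {w. chain_rel X f (x k) w}) \<noteq> {}"
proof (rule compact_closed_chain[OF assms(1)])
  define R where "R k = {w. chain_rel X f (x k) w}" for k
  have "decseq R"
    unfolding R_def using step chain_rel_trans by (intro decseq_SucI) blast
  show "range R \<noteq> {}"
    by simp
  show "{} \<notin> range R"
    using step unfolding R_def by auto
  show "closed T \<and> T \<subseteq> X" if "T \<in> range R" for T
    using that compact_imp_closed[OF assms(1)] closed_chain_rel_forward chain_rel_imp_mem(2)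
    unfolding R_def by auto
  show "T \<subseteq> T' \<or> T' \<subseteq> T" if T: "T \<in> range R" and T': "T' \<in> range R" for T T'
  proof -
    obtain i j where "T = R i" and "T' = R j"
      using T T' by blast
    then show ?thesis
      using decseqD[OF \<open>decseq R\<close>] by (cases "i \<le> j") auto
  qed
qed

lemma chain_recurrent_point_in_invariant_set:
  assumes "compact X" and "f ` X \<subseteq> X" and "S \<subseteq> X" and "S \<noteq> {}"
    and invariant: "\<And>z w. z \<in> S \<Longrightarrow> chain_rel X f z w \<Longrightarrow> w \<in> S"
  shows "\<exists>y\<in>S. chain_rel X f y y"
proof -
  have "transp (chain_rel X f)"
    using chain_rel_trans by (rule transpI)
  have closed_forward: "closed {w. chain_rel X f z w}" for z
    using compact_imp_closed[OF assms(1)] by (rule closed_chain_rel_forward)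
  have step: "chain_rel X f z (f z)" if "z \<in> S" for z
    using that assms(2,3) by (blast intro: chain_rel_image)
  then have nonempty: "\<exists>w. chain_rel X f z w" if "z \<in> S" for z
    using that by blast
  have "\<exists>z\<in>S. \<forall>w. chain_rel X f z w \<longrightarrow> {v. chain_rel X f w v} = {v. chain_rel X f z v}"
    using compact_transp_minimal_forward_set[of X S "chain_rel X f"] assms(1,3,4)
      \<open>transp (chain_rel X f)\<close> invariant closed_forward nonempty
    by metis
  then obtain z where "z \<in> S"
    and minimal: "\<forall>w. chain_rel X f z w \<longrightarrow> {v. chain_rel X f w v} = {v. chain_rel X f z v}"
    by (elim bexE)
  then have "chain_rel X f (f z) (f z)"
    using step[OF \<open>z \<in> S\<close>] by (metis mem_Collect_eq)
  moreover have "f z \<in> S"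
    using invariant \<open>z \<in> S\<close> step by blast
  ultimately show ?thesis
    by blast
qed

theorem lemma3p5:
  fixes X :: "'a::metric_space set" and f :: "'a \<Rightarrow> 'a" and x :: "nat \<Rightarrow> 'a"
  assumes "compact X"
    and "f ` X \<subseteq> X"
    and "\<And>k. x k \<in> chain_recurrent_set X f"
    and "\<And>k. chain_rel X f (x k) (x (Suc k))"
  shows "\<exists>y \<in> chain_recurrent_set X f. \<forall>k. chain_rel X f (x k) y"
proof -
  define S where "S = (\<Inter>k. {w. chain_rel X f (x k) w})"
  have "S \<noteq> {}"
    unfolding S_def using assms(1,4) by (rule chain_rel_seq_Inter_nonempty)
  moreover have "S \<subseteq> X"
    unfolding S_def using chain_rel_imp_mem(2) by blast
  moreover have "w \<in> S" if "z \<in> S" and "chain_rel X f z w" for z w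
    using that chain_rel_trans unfolding S_def by blast
  ultimately obtain y where "y \<in> S" and "chain_rel X f y y"
    using chain_recurrent_point_in_invariant_set[OF assms(1,2)] by blast
  then show ?thesis
    using \<open>S \<subseteq> X\<close> unfolding chain_recurrent_set_def S_def by blast
qed

end
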